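(* Let $H$ be a connected graph with $n\ge2$ vertices, let $v$ be a vertex of $H$ such that every vertex of $H$ is within distance $d$ of $v$, where $d\ge2$ is an integer, and suppose each vertex of $H$ independently receives a geometrically distributed number of pebbles with parameter $(1+\alpha)^{-1}$, where $\alpha\in\mathbb R_{>0}$. Writing $k:=\lceil n^{1/d}-1\rceil$, the probability that $v$ is unpebblable is at most $$\left(\frac{e\,(2^{d-1}+k-1)}{k\,(1+\Phi(\alpha))}\right)^{k}.$$
   Context: Pebbling: a distribution on a graph assigns a nonnegative integer number of pebbles to each vertex. A pebbling move removes two pebbles from a vertex having at least two pebbles and adds one pebble to an adjacent vertex. A vertex is pebblable if some sequence of pebbling moves from the distribution ends with at least one pebble on it, and unpebblable otherwise. A geometric random variable with parameter $p$ takes value $k\in\{0,1,2,\dots\}$ with probability $p(1-p)^k$. $\Phi:\mathbb R_{\ge0}\to\mathbb R_{\ge0}$ is defined by $\Phi(\alpha):=\alpha^2/(2\alpha+1)$. *)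

theory Defs
  imports "HOL-Probability.Probability"
begin

definition simple_graph :: "'a set \<Rightarrow> ('a \<Rightarrow> 'a \<Rightarrow> bool) \<Rightarrow> bool" where
  "simple_graph V E \<longleftrightarrow> finite V \<and> (\<forall>x y. E x y \<longrightarrow> x \<in> V \<and> y \<in> V)
     \<and> (\<forall>x y. E x y \<longrightarrow> E y x) \<and> (\<forall>x. \<not> E x x)"

definition connected_graph :: "'a set \<Rightarrow> ('a \<Rightarrow> 'a \<Rightarrow> bool) \<Rightarrow> bool" where
  "connected_graph V E \<longleftrightarrow> V \<noteq> {} \<and> (\<forall>x\<in>V. \<forall>y\<in>V. E\<^sup>*\<^sup>* x y)"

definition within_dist :: "('a \<Rightarrow> 'a \<Rightarrow> bool) \<Rightarrow> 'a \<Rightarrow> nat \<Rightarrow> 'a \<Rightarrow> bool" where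
  "within_dist E v d u \<longleftrightarrow> (\<exists>m\<le>d. (E ^^ m) v u)"

definition pebbling_move :: "('a \<Rightarrow> 'a \<Rightarrow> bool) \<Rightarrow> ('a \<Rightarrow> nat) \<Rightarrow> ('a \<Rightarrow> nat) \<Rightarrow> bool" where
  "pebbling_move E D D' \<longleftrightarrow> (\<exists>x y. E x y \<and> D x \<ge> 2 \<and>
       D' = (D(x := D x - 2))(y := D y + 1))"

definition pebblable :: "('a \<Rightarrow> 'a \<Rightarrow> bool) \<Rightarrow> ('a \<Rightarrow> nat) \<Rightarrow> 'a \<Rightarrow> bool" where
  "pebblable E D v \<longleftrightarrow> (\<exists>D'. (pebbling_move E)\<^sup>*\<^sup>* D D' \<and> D' v \<ge> 1)"

definition Phi :: "real \<Rightarrow> real" where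
  "Phi \<alpha> = \<alpha>\<^sup>2 / (2 * \<alpha> + 1)"

end

theory Submission
  imports Defs
begin

text \<open>
  Since \<open>k^d < n\<close> and the ball of radius \<open>d\<close> around \<open>v\<close> is the whole graph, some vertex \<open>w\<close> at
  distance at most \<open>d - 1\<close> from \<open>v\<close> has at least \<open>k\<close> neighbours: otherwise the ball would have at
  most \<open>k^d\<close> vertices. Fix a set \<open>C\<close> of \<open>k\<close> of them. If \<open>S = \<Sum>c\<in>C. \<lfloor>D c / 2\<rfloor> \<ge> 2^(d-1)\<close>, these
  pebbles can be moved onto \<open>w\<close> and from there along a walk of length at most \<open>d - 1\<close> to \<open>v\<close>;
  so if \<open>v\<close> is unpebblable then \<open>S \<le> L = 2^(d-1) - 1\<close>. By Markov's inequality for \<open>z^S\<close>,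
  \<open>P(S \<le> L) \<le> E z^S / z^L\<close>, and by independence \<open>E z^S = G^k\<close>, where for \<open>X\<close> geometric with
  \<open>q = 1 - p = \<alpha>/(1+\<alpha>)\<close> one has \<open>G = E z^\<lfloor>X/2\<rfloor> = (1 - q^2)/(1 - q^2 z)\<close> and \<open>1 - q^2 = 1/(1 + \<Phi>(\<alpha>))\<close>.
  The choice \<open>z = L/(L+k)\<close> together with \<open>(1 + k/L)^L \<le> e^k\<close> gives the bound.
\<close>

lemma pebblable_if_rtranclp_pebbling_move:
  assumes "(pebbling_move E)\<^sup>*\<^sup>* D D'" and "pebblable E D' v"
  shows "pebblable E D v"
  using assms unfolding pebblable_def by (meson rtranclp_trans)

lemma rtranclp_pebbling_move_repeat:
  assumes "E x y" and "x \<noteq> y" and "2 * t \<le> D x"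
  shows "(pebbling_move E)\<^sup>*\<^sup>* D (D(x := D x - 2 * t, y := D y + t))"
  using assms(3)
proof (induction t)
  case 0
  then show ?case by simp
next
  case (Suc t)
  let ?D = "D(x := D x - 2 * t, y := D y + t)"
  have "(pebbling_move E)\<^sup>*\<^sup>* D ?D"
    using Suc.prems by (intro Suc.IH) simp
  moreover have "pebbling_move E ?D (?D(x := ?D x - 2, y := ?D y + 1))"
    unfolding pebbling_move_def using assms Suc.prems by (intro exI[of _ x] exI[of _ y]) auto
  moreover have "?D(x := ?D x - 2, y := ?D y + 1) = D(x := D x - 2 * Suc t, y := D y + Suc t)"
    using assms by (auto simp: fun_eq_iff)
  ultimately show ?case
    by (metis rtranclp.rtrancl_into_rtrancl)
qed

lemma pebblable_if_walk:
  assumes "irreflp E" and "(E ^^ m) x u" and "2 ^ m \<le> D x"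
  shows "pebblable E D u"
  using assms(2,3)
proof (induction m arbitrary: x D)
  case 0
  then show ?case by (auto simp: pebblable_def)
next
  case (Suc m)
  from Suc.prems(1) obtain y where "E x y" and "(E ^^ m) y u" by (rule relpowp_Suc_E2)
  moreover have "x \<noteq> y"
    using \<open>E x y\<close> assms(1) by (auto simp: irreflp_def)
  ultimately have "(pebbling_move E)\<^sup>*\<^sup>* D (D(x := D x - 2 * 2 ^ m, y := D y + 2 ^ m))"
    and "pebblable E (D(x := D x - 2 * 2 ^ m, y := D y + 2 ^ m)) u"
    using Suc rtranclp_pebbling_move_repeat[of E x y "2 ^ m" D] by simp_all
  then show ?case
    by (rule pebblable_if_rtranclp_pebbling_move)
qed

lemma rtranclp_pebbling_move_gather:
  assumes "finite C" and "\<forall>c\<in>C. E c w" and "w \<notin> C"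
  shows "\<exists>D'. (pebbling_move E)\<^sup>*\<^sup>* D D' \<and> D w + (\<Sum>c\<in>C. D c div 2) \<le> D' w"
  using assms
proof (induction C arbitrary: D rule: finite_induct)
  case empty
  then show ?case by auto
next
  case (insert c C)
  let ?D = "D(c := D c - 2 * (D c div 2), w := D w + D c div 2)"
  have first: "(pebbling_move E)\<^sup>*\<^sup>* D ?D"
    using insert.prems by (intro rtranclp_pebbling_move_repeat) auto
  have "\<forall>c\<in>C. E c w" and "w \<notin> C"
    using insert.prems by auto
  then obtain D' where rest: "(pebbling_move E)\<^sup>*\<^sup>* ?D D'"
    and gain: "?D w + (\<Sum>c\<in>C. ?D c div 2) \<le> D' w"
    using insert.IH[of ?D] by blast
  have "(\<Sum>c\<in>C. ?D c div 2) = (\<Sum>c\<in>C. D c div 2)"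
    using insert by (intro sum.cong) auto
  then have "D w + (\<Sum>c\<in>insert c C. D c div 2) \<le> D' w"
    using gain insert by simp
  then show ?case
    using rtranclp_trans[OF first rest] by blast
qed

lemma pebblable_if_half_sum_neighbours:
  assumes "irreflp E" and "finite C" and "\<forall>c\<in>C. E c w" and "(E ^^ m) w v"
    and "2 ^ m \<le> (\<Sum>c\<in>C. D c div 2)"
  shows "pebblable E D v"
proof -
  have "w \<notin> C"
    using assms(1,3) by (auto simp: irreflp_def)
  then obtain D' where moves: "(pebbling_move E)\<^sup>*\<^sup>* D D'"
    and "D w + (\<Sum>c\<in>C. D c div 2) \<le> D' w"
    using rtranclp_pebbling_move_gather[of C E w D] assms(2,3) by blast
  then have "2 ^ m \<le> D' w"
    using assms(5) by linarith
  then have "pebblable E D' v"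
    using pebblable_if_walk[OF assms(1,4)] by blast
  then show ?thesis
    by (rule pebblable_if_rtranclp_pebbling_move[OF moves])
qed

lemma relpowp_symp:
  assumes "symp E" and "(E ^^ m) x y"
  shows "(E ^^ m) y x"
  using assms(2)
proof (induction m arbitrary: x y)
  case 0
  then show ?case by simp
next
  case (Suc m)
  from Suc.prems obtain u where "(E ^^ m) x u" and "E u y" by (rule relpowp_Suc_E)
  then show ?case
    using Suc.IH assms(1) by (meson relpowp_Suc_I2 sympD)
qed

lemma within_dist_Suc_subset:
  "{u. within_dist E v (Suc i) u} \<subseteq> (\<Union>x\<in>{u. within_dist E v i u}. insert x {y. E x y})"
proof
  fix u
  assume "u \<in> {u. within_dist E v (Suc i) u}"
  then obtain m where "m \<le> Suc i" and walk: "(E ^^ m) v u"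
    by (auto simp: within_dist_def)
  show "u \<in> (\<Union>x\<in>{u. within_dist E v i u}. insert x {y. E x y})"
  proof (cases "m = Suc i")
    case True
    with walk have "(E ^^ Suc i) v u" by simp
    then obtain x where "(E ^^ i) v x" and "E x u" by (rule relpowp_Suc_E)
    then show ?thesis by (auto simp: within_dist_def)
  next
    case False
    with \<open>m \<le> Suc i\<close> walk have "within_dist E v i u"
      unfolding within_dist_def by (intro exI[of _ m]) simp
    then show ?thesis by blast
  qed
qed

lemma card_within_dist_le_power:
  assumes finite_nbhd: "\<And>x. finite {y. E x y}"
    and degree: "\<And>x. within_dist E v j x \<Longrightarrow> card {y. E x y} < k"
    and "i \<le> Suc j"
  shows "finite {u. within_dist E v i u} \<and> card {u. within_dist E v i u} \<le> k ^ i"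
  using assms(3)
proof (induction i)
  case 0
  have "{u. within_dist E v 0 u} = {v}" by (auto simp: within_dist_def)
  then show ?case by simp
next
  case (Suc i)
  let ?B = "\<lambda>i. {u. within_dist E v i u}"
  have IH: "finite (?B i)" "card (?B i) \<le> k ^ i"
    using Suc by auto
  have finite_union: "finite (\<Union>x\<in>?B i. insert x {y. E x y})"
    using IH(1) finite_nbhd by simp
  have "card (?B (Suc i)) \<le> card (\<Union>x\<in>?B i. insert x {y. E x y})"
    by (rule card_mono[OF finite_union within_dist_Suc_subset])
  also have "\<dots> \<le> (\<Sum>x\<in>?B i. card (insert x {y. E x y}))"
    by (rule card_UN_le[OF IH(1)])
  also have "\<dots> \<le> (\<Sum>x\<in>?B i. k)"
  proof (rule sum_mono)
    fix x
    assume "x \<in> ?B i"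
    then obtain m where "m \<le> i" and "(E ^^ m) v x"
      by (auto simp: within_dist_def)
    then have "within_dist E v j x"
      using Suc.prems unfolding within_dist_def by (intro exI[of _ m]) simp
    then show "card (insert x {y. E x y}) \<le> k"
      using degree[of x] finite_nbhd[of x] by (simp add: card_insert_if)
  qed
  also have "\<dots> \<le> k ^ Suc i"
    using IH(2) by (simp add: mult.commute)
  finally show ?case
    using finite_subset[OF within_dist_Suc_subset finite_union] by simp
qed

lemma exists_within_dist_degree_ge:
  assumes "simple_graph V E" and "1 \<le> d" and "\<forall>u\<in>V. within_dist E v d u" and "k ^ d < card V"
  obtains w where "within_dist E v (d - 1) w" and "k \<le> card {y. E w y}"
proof (rule ccontr)
  assume "\<not> thesis"
  then have degree: "\<And>x. within_dist E v (d - 1) x \<Longrightarrow> card {y. E x y} < k"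
    using that by (meson not_le)
  have "{y. E x y} \<subseteq> V" and "finite V" for x
    using assms(1) by (auto simp: simple_graph_def)
  then have finite_nbhd: "\<And>x. finite {y. E x y}"
    by (meson finite_subset)
  have "finite {u. within_dist E v d u}" and "card {u. within_dist E v d u} \<le> k ^ d"
    using card_within_dist_le_power[OF finite_nbhd degree, where i=d] assms(2) by auto
  moreover have "V \<subseteq> {u. within_dist E v d u}"
    using assms(3) by auto
  ultimately have "card V \<le> k ^ d"
    by (meson card_mono le_trans)
  then show False
    using assms(4) by simp
qed

lemma exists_neighbours_half_sum_less_if_unpebblable:
  assumes "simple_graph V E" and "1 \<le> d" and "\<forall>u\<in>V. within_dist E v d u" and "k ^ d < card V"
  obtains C where "C \<subseteq> V" and "card C = k"
    and "\<And>D. \<not> pebblable E D v \<Longrightarrow> (\<Sum>c\<in>C. D c div 2) < 2 ^ (d - 1)"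
proof -
  obtain w where "within_dist E v (d - 1) w" and "k \<le> card {y. E w y}"
    using exists_within_dist_degree_ge[OF assms] .
  then obtain m where "m \<le> d - 1" and "(E ^^ m) v w"
    unfolding within_dist_def by blast
  obtain C where C: "C \<subseteq> {y. E w y}" "card C = k" "finite C"
    using obtain_subset_with_card_n[OF \<open>k \<le> card {y. E w y}\<close>] .
  have "irreflp E" and "symp E" and "{y. E w y} \<subseteq> V"
    using assms(1) by (auto simp: simple_graph_def irreflp_def symp_def)
  have walk: "(E ^^ m) w v"
    using relpowp_symp[OF \<open>symp E\<close> \<open>(E ^^ m) v w\<close>] .
  have adjacent: "\<forall>c\<in>C. E c w"
    using C(1) \<open>symp E\<close> by (auto dest: sympD)
  show ?thesis
  proof (rule that)
    show "C \<subseteq> V" and "card C = k"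
      using C \<open>{y. E w y} \<subseteq> V\<close> by auto
  next
    fix D
    assume "\<not> pebblable E D v"
    then have "(\<Sum>c\<in>C. D c div 2) < 2 ^ m"
      using pebblable_if_half_sum_neighbours[OF \<open>irreflp E\<close> C(3) adjacent walk] by (meson not_le)
    also have "(2::nat) ^ m \<le> 2 ^ (d - 1)"
      using \<open>m \<le> d - 1\<close> by (intro power_increasing) auto
    finally show "(\<Sum>c\<in>C. D c div 2) < 2 ^ (d - 1)" .
  qed
qed

lemma ceiling_root_sub_one:
  assumes "2 \<le> n" and "1 \<le> d"
  defines "k \<equiv> nat \<lceil>real n powr (1 / real d) - 1\<rceil>"
  shows "1 \<le> k" and "k ^ d < n"
proof -
  define y where "y = real n powr (1 / real d)"
  have "1 < y"
    using assms(1,2) unfolding y_def by (intro gr_one_powr) auto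
  then have "0 \<le> \<lceil>y - 1\<rceil>"
    by simp
  then have "real k = of_int \<lceil>y - 1\<rceil>"
    unfolding k_def y_def[symmetric] by (rule of_nat_nat)
  moreover have "of_int \<lceil>y - 1\<rceil> < y" and "y - 1 \<le> of_int \<lceil>y - 1\<rceil>"
    using ceiling_correct[of "y - 1"] by auto
  ultimately have "0 < real k" and k_less: "real k < y"
    using \<open>1 < y\<close> by linarith+
  then show "1 \<le> k"
    by simp
  have "real k ^ d < y ^ d"
    using k_less assms(2) by (intro power_strict_mono) auto
  also have "\<dots> = real n"
    using assms unfolding y_def by (simp add: powr_power)
  finally show "k ^ d < n"
    by (metis of_nat_less_iff of_nat_power)
qed

lemma expectation_geometric_pmf_power_div2:
  fixes p z :: real
  assumes "0 < p" and "p \<le> 1" and "0 \<le> z" and "z \<le> 1"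
  shows "measure_pmf.expectation (geometric_pmf p) (\<lambda>n. z ^ (n div 2))
           = (1 - (1 - p)\<^sup>2) / (1 - (1 - p)\<^sup>2 * z)"
proof -
  define q where "q = 1 - p"
  define h where "h n = q ^ n * p * z ^ (n div 2)" for n
  have q: "0 \<le> q" "q < 1"
    using assms by (auto simp: q_def)
  have expectation_eq: "measure_pmf.expectation (geometric_pmf p) (\<lambda>n. z ^ (n div 2))
      = (\<integral>n. h n \<partial>count_space UNIV)"
    unfolding measure_pmf_eq_density using assms
    by (subst integral_density) (auto simp: h_def[abs_def] q_def)
  have "summable (\<lambda>n. q ^ n * p)"
    using q by (intro summable_mult2 summable_geometric) auto
  moreover have "norm (h n) \<le> q ^ n * p" for n
    using q assms mult_left_mono[of "z ^ (n div 2)" 1 "q ^ n * p"]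
    by (simp add: h_def power_le_one)
  ultimately have summable_norm: "summable (\<lambda>n. norm (h n))"
    using summable_comparison_test'[of "\<lambda>n. q ^ n * p" 0 "\<lambda>n. norm (h n)"] by simp
  \<comment> \<open>grouping the terms in pairs \<open>2m, 2m+1\<close> turns the series into a geometric one\<close>
  have "h (2 * m) + h (2 * m + 1) = p * (1 + q) * (q\<^sup>2 * z) ^ m" for m
    by (simp add: h_def power_mult_distrib algebra_simps flip: power_mult)
  then have grouped: "(\<lambda>m. p * (1 + q) * (q\<^sup>2 * z) ^ m) sums suminf h"
    using sums_group[OF summable_sums[OF summable_norm_cancel[OF summable_norm]], of 2]
    by (simp add: mult.commute numeral_2_eq_2)
  have "q\<^sup>2 * z < 1"
    using q assms mult_left_mono[of z 1 "q\<^sup>2"] power_less_one_iff[of q 2] by simp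
  then have "(\<lambda>m. p * (1 + q) * (q\<^sup>2 * z) ^ m) sums (p * (1 + q) * (1 / (1 - q\<^sup>2 * z)))"
    using q assms by (intro sums_mult geometric_sums) simp
  then have "suminf h = p * (1 + q) / (1 - q\<^sup>2 * z)"
    using grouped by (simp add: sums_unique2)
  moreover have "(\<integral>n. h n \<partial>count_space UNIV) = suminf h"
    using summable_norm by (simp add: integrable_count_space_nat_iff integral_count_space_nat)
  moreover have "p * (1 + q) = 1 - q\<^sup>2"
    by (simp add: q_def power2_eq_square algebra_simps)
  ultimately show ?thesis
    using expectation_eq by (simp add: q_def)
qed

lemma prob_le_expectation_power_div:
  fixes M :: "'a pmf" and S :: "'a \<Rightarrow> nat" and z :: real
  assumes "0 < z" and "z \<le> 1"
  shows "measure_pmf.prob M {x. S x \<le> L} \<le> measure_pmf.expectation M (\<lambda>x. z ^ S x) / z ^ L"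
proof -
  have "measure_pmf.prob M {x. S x \<le> L} = measure_pmf.expectation M (indicator {x. S x \<le> L})"
    by simp
  also have "\<dots> \<le> measure_pmf.expectation M (\<lambda>x. z ^ S x / z ^ L)"
  proof (rule integral_mono')
    show "integrable (measure_pmf M) (\<lambda>x. z ^ S x / z ^ L)"
      using assms by (intro measure_pmf.integrable_const_bound[where B="1 / z ^ L"])
        (auto intro!: divide_right_mono simp: power_le_one)
    fix x
    show "0 \<le> z ^ S x / z ^ L"
      using assms by simp
    show "indicator {x. S x \<le> L} x \<le> z ^ S x / z ^ L"
      using assms power_decreasing[of "S x" L z] by (auto simp: indicator_def)
  qed
  finally show ?thesis
    by simp
qed

lemma expectation_Pi_pmf_prod_subset:
  fixes g :: "'b \<Rightarrow> real"
  assumes "finite A" and "C \<subseteq> A" and "integrable (measure_pmf p) g" and "\<And>y. 0 \<le> g y"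
  shows "measure_pmf.expectation (Pi_pmf A dflt (\<lambda>_. p)) (\<lambda>D. \<Prod>c\<in>C. g (D c))
           = measure_pmf.expectation p g ^ card C"
proof -
  define f where "f x = (if x \<in> C then g else (\<lambda>_. 1))" for x
  have f_apply: "f x y = (if x \<in> C then g y else 1)" for x y
    by (simp add: f_def)
  have "(\<Prod>c\<in>C. g (D c)) = (\<Prod>x\<in>A. f x (D x))" for D :: "'a \<Rightarrow> 'b"
    using assms(1,2) by (simp add: f_apply prod.If_cases Int_absorb1)
  then have "measure_pmf.expectation (Pi_pmf A dflt (\<lambda>_. p)) (\<lambda>D. \<Prod>c\<in>C. g (D c))
      = measure_pmf.expectation (Pi_pmf A dflt (\<lambda>_. p)) (\<lambda>D. \<Prod>x\<in>A. f x (D x))"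
    by simp
  also have "\<dots> = (\<Prod>x\<in>A. measure_pmf.expectation p (f x))"
    by (rule expectation_prod_Pi_pmf) (use assms in \<open>auto simp: f_def\<close>)
  also have "\<dots> = (\<Prod>x\<in>A. if x \<in> C then measure_pmf.expectation p g else 1)"
    by (intro prod.cong) (auto simp: f_def)
  also have "\<dots> = measure_pmf.expectation p g ^ card C"
    using assms(1,2) by (simp add: prod.If_cases Int_absorb1)
  finally show ?thesis .
qed

lemma one_minus_sq_one_minus_inverse_eq_Phi:
  fixes \<alpha> :: real
  assumes "0 \<le> \<alpha>"
  shows "1 - (1 - 1 / (1 + \<alpha>))\<^sup>2 = 1 / (1 + Phi \<alpha>)"
proof -
  have "1 + \<alpha> \<noteq> 0"
    using assms by simp
  then have "1 - (1 - 1 / (1 + \<alpha>))\<^sup>2 = (2 * \<alpha> + 1) / (1 + \<alpha>)\<^sup>2"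
    by (simp add: field_simps) (simp add: power2_eq_square algebra_simps)
  moreover have "1 + Phi \<alpha> = (1 + \<alpha>)\<^sup>2 / (2 * \<alpha> + 1)"
    using assms by (simp add: Phi_def field_simps power2_eq_square)
  ultimately show ?thesis
    by simp
qed

lemma Chernoff_bound_optimal_parameter:
  fixes r :: real and L k :: nat
  assumes "0 \<le> r" and "r \<le> 1" and "1 \<le> L" and "1 \<le> k"
  defines "z \<equiv> real L / (real L + real k)"
  shows "((1 - r) / (1 - r * z)) ^ k / z ^ L \<le> (exp 1 * (1 - r) * (real L + real k) / real k) ^ k"
proof -
  have "0 < z" and "z < 1"
    using assms(3,4) by (auto simp: z_def field_simps)
  have "real k / (real L + real k) = 1 - z"
    using assms(3,4) by (simp add: z_def field_simps)
  also have "\<dots> \<le> 1 - r * z"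
    using assms(2) \<open>0 < z\<close> by (simp add: mult_left_le_one_le)
  finally have "real k / (real L + real k) \<le> 1 - r * z" .
  moreover have "0 < real k / (real L + real k)"
    using assms(4) by simp
  ultimately have "(1 - r) / (1 - r * z) \<le> (1 - r) / (real k / (real L + real k))"
    using assms(2) by (intro divide_left_mono mult_pos_pos) linarith+
  then have base: "(1 - r) / (1 - r * z) \<le> (1 - r) * (real L + real k) / real k"
    by simp
  have "1 / z ^ L = (1 + real k / real L) ^ L"
    using assms(3,4) by (simp add: z_def power_divide field_simps)
  also have "\<dots> \<le> exp (real k)"
    using assms(3) by (intro exp_ge_one_plus_x_over_n_power_n) auto
  also have "\<dots> = exp 1 ^ k"
    by (simp flip: exp_of_nat_mult)
  finally have exp_bound: "1 / z ^ L \<le> exp 1 ^ k" .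
  have "r * z < 1"
    using assms(1,2) \<open>0 < z\<close> \<open>z < 1\<close> mult_left_le_one_le[of z r] by linarith
  have "((1 - r) / (1 - r * z)) ^ k / z ^ L = ((1 - r) / (1 - r * z)) ^ k * (1 / z ^ L)"
    by simp
  also have "\<dots> \<le> ((1 - r) * (real L + real k) / real k) ^ k * exp 1 ^ k"
    using assms(2) \<open>0 < z\<close> \<open>r * z < 1\<close> base exp_bound
    by (intro mult_mono power_mono) auto
  also have "\<dots> = (exp 1 * (1 - r) * (real L + real k) / real k) ^ k"
    by (simp add: power_mult_distrib[symmetric] algebra_simps)
  finally show ?thesis .
qed

lemma prob_half_sum_le_Pi_geometric:
  fixes p z :: real
  assumes "finite V" and "C \<subseteq> V" and "0 < p" and "p \<le> 1" and "0 < z" and "z \<le> 1"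
  shows "measure_pmf.prob (Pi_pmf V 0 (\<lambda>_. geometric_pmf p)) {D. (\<Sum>c\<in>C. D c div 2) \<le> L}
    \<le> ((1 - (1 - p)\<^sup>2) / (1 - (1 - p)\<^sup>2 * z)) ^ card C / z ^ L"
proof -
  have "integrable (measure_pmf (geometric_pmf p)) (\<lambda>n. z ^ (n div 2))"
    using assms by (intro measure_pmf.integrable_const_bound[where B=1]) (auto simp: power_le_one)
  then have "measure_pmf.expectation (Pi_pmf V 0 (\<lambda>_. geometric_pmf p)) (\<lambda>D. z ^ (\<Sum>c\<in>C. D c div 2))
      = measure_pmf.expectation (geometric_pmf p) (\<lambda>n. z ^ (n div 2)) ^ card C"
    unfolding power_sum using assms by (intro expectation_Pi_pmf_prod_subset) auto
  also have "\<dots> = ((1 - (1 - p)\<^sup>2) / (1 - (1 - p)\<^sup>2 * z)) ^ card C"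
    using assms by (simp add: expectation_geometric_pmf_power_div2)
  finally have "measure_pmf.expectation (Pi_pmf V 0 (\<lambda>_. geometric_pmf p)) (\<lambda>D. z ^ (\<Sum>c\<in>C. D c div 2))
      = ((1 - (1 - p)\<^sup>2) / (1 - (1 - p)\<^sup>2 * z)) ^ card C" .
  then show ?thesis
    using prob_le_expectation_power_div[OF assms(5,6)] by metis
qed

lemma prob_half_sum_le_exp_Phi:
  fixes \<alpha> :: real and L k :: nat
  assumes "finite V" and "C \<subseteq> V" and "card C = k" and "1 \<le> k" and "1 \<le> L" and "0 < \<alpha>"
  shows "measure_pmf.prob (Pi_pmf V 0 (\<lambda>_. geometric_pmf (1 / (1 + \<alpha>)))) {D. (\<Sum>c\<in>C. D c div 2) \<le> L}
    \<le> (exp 1 * (real L + real k) / (real k * (1 + Phi \<alpha>))) ^ k"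
proof -
  define p where "p = 1 / (1 + \<alpha>)"
  define z where "z = real L / (real L + real k)"
  have "0 < p" and "p \<le> 1" and "0 < z" and "z \<le> 1"
    using assms(5,6) by (auto simp: p_def z_def)
  then have "measure_pmf.prob (Pi_pmf V 0 (\<lambda>_. geometric_pmf p)) {D. (\<Sum>c\<in>C. D c div 2) \<le> L}
      \<le> ((1 - (1 - p)\<^sup>2) / (1 - (1 - p)\<^sup>2 * z)) ^ k / z ^ L"
    using prob_half_sum_le_Pi_geometric[OF assms(1,2)] assms(3) by blast
  also have "\<dots> \<le> (exp 1 * (1 - (1 - p)\<^sup>2) * (real L + real k) / real k) ^ k"
    unfolding z_def using \<open>0 < p\<close> \<open>p \<le> 1\<close> assms(4,5)
    by (intro Chernoff_bound_optimal_parameter) (auto simp: power_le_one)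
  also have "\<dots> = (exp 1 * (real L + real k) / (real k * (1 + Phi \<alpha>))) ^ k"
  proof -
    have r: "1 - (1 - p)\<^sup>2 = 1 / (1 + Phi \<alpha>)"
      using assms(6) unfolding p_def by (simp add: one_minus_sq_one_minus_inverse_eq_Phi)
    have "0 < 1 + Phi \<alpha>"
      using assms(6) by (simp add: Phi_def add_pos_nonneg)
    then show ?thesis
      unfolding r by (simp add: field_simps)
  qed
  finally show ?thesis
    unfolding p_def .
qed

theorem lemma24:
  fixes V :: "'a set" and E :: "'a \<Rightarrow> 'a \<Rightarrow> bool" and v :: 'a
    and d :: nat and \<alpha> :: real
  assumes "simple_graph V E" and "connected_graph V E"
    and "card V \<ge> 2"
    and "v \<in> V" and "d \<ge> 2"
    and "\<forall>u\<in>V. within_dist E v d u"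
    and "\<alpha> > 0"
  shows "let n = card V; k = nat \<lceil>real n powr (1 / real d) - 1\<rceil> in
    measure_pmf.prob (Pi_pmf V 0 (\<lambda>_. geometric_pmf (1 / (1 + \<alpha>))))
      {D. \<not> pebblable E D v}
    \<le> (exp 1 * (2 ^ (d - 1) + real k - 1) / (real k * (1 + Phi \<alpha>))) ^ k"
proof -
  define k where "k = nat \<lceil>real (card V) powr (1 / real d) - 1\<rceil>"
  define L where "L = (2::nat) ^ (d - 1) - 1"
  have "1 \<le> k" and "k ^ d < card V"
    using ceiling_root_sub_one[of "card V" d] assms(3,5) unfolding k_def by auto
  moreover have "1 \<le> d"
    using assms(5) by simp
  ultimately obtain C where "C \<subseteq> V" and "card C = k"
    and few: "\<And>D. \<not> pebblable E D v \<Longrightarrow> (\<Sum>c\<in>C. D c div 2) < 2 ^ (d - 1)"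
    using exists_neighbours_half_sum_less_if_unpebblable[OF assms(1) _ assms(6)] by blast
  have "1 \<le> L"
    using assms(5) one_less_power[of "2::nat" "d - 1"] unfolding L_def by simp
  have "finite V"
    using assms(1) by (simp add: simple_graph_def)
  have "measure_pmf.prob (Pi_pmf V 0 (\<lambda>_. geometric_pmf (1 / (1 + \<alpha>)))) {D. \<not> pebblable E D v}
      \<le> measure_pmf.prob (Pi_pmf V 0 (\<lambda>_. geometric_pmf (1 / (1 + \<alpha>)))) {D. (\<Sum>c\<in>C. D c div 2) \<le> L}"
    using few unfolding L_def by (intro measure_pmf.finite_measure_mono) force+
  also have "\<dots> \<le> (exp 1 * (real L + real k) / (real k * (1 + Phi \<alpha>))) ^ k"
    using prob_half_sum_le_exp_Phi \<open>finite V\<close> \<open>C \<subseteq> V\<close> \<open>card C = k\<close> \<open>1 \<le> k\<close> \<open>1 \<le> L\<close> assms(7) .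
  also have "real L + real k = 2 ^ (d - 1) + real k - 1"
    using one_le_power[of "2::nat" "d - 1"] by (simp add: L_def of_nat_diff)
  finally show ?thesis
    unfolding Let_def k_def .
qed

end
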